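(* Let $G$ be a pro-oligomorphic group and $U$ an open subgroup. Let $n(U)$ be the supremum of the set of $n\in\mathbf{N}$ for which there is a strict chain of subgroups $U=U_0\subsetneq U_1\subsetneq\cdots\subsetneq U_n\subset G$. Then $n(U)$ is finite; in fact $n(U)$ is at most the cardinality of the double coset space $U\backslash G/U$.
   Context: A pro-oligomorphic group is a topological group that is Hausdorff, non-archimedean (open subgroups form a neighborhood basis of the identity), and Roelcke pre-compact (for any open subgroups $U,V$, the double coset space $U\backslash G/V$ is finite). *)

theory Defs
  imports "HOL-Analysis.Analysis" "HOL-Algebra.Group" "HOL-Library.Extended_Nat"
begin

definition topological_group :: "('a, 'b) monoid_scheme \<Rightarrow> 'a topology \<Rightarrow> bool" where
  "topological_group G T \<longleftrightarrow> group G \<and> topspace T = carrier G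
     \<and> continuous_map (prod_topology T T) T (\<lambda>(x, y). x \<otimes>\<^bsub>G\<^esub> y)
     \<and> continuous_map T T (\<lambda>x. inv\<^bsub>G\<^esub> x)"

definition open_subgroup :: "('a, 'b) monoid_scheme \<Rightarrow> 'a topology \<Rightarrow> 'a set \<Rightarrow> bool" where
  "open_subgroup G T U \<longleftrightarrow> subgroup U G \<and> openin T U"

definition double_cosets :: "('a, 'b) monoid_scheme \<Rightarrow> 'a set \<Rightarrow> 'a set \<Rightarrow> 'a set set" where
  "double_cosets G U V =
     {{u \<otimes>\<^bsub>G\<^esub> g \<otimes>\<^bsub>G\<^esub> v | u v. u \<in> U \<and> v \<in> V} | g. g \<in> carrier G}"

definition pro_oligomorphic :: "('a, 'b) monoid_scheme \<Rightarrow> 'a topology \<Rightarrow> bool" where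
  "pro_oligomorphic G T \<longleftrightarrow>
     topological_group G T \<and> Hausdorff_space T
     \<and> (\<forall>W. openin T W \<and> \<one>\<^bsub>G\<^esub> \<in> W \<longrightarrow> (\<exists>V. open_subgroup G T V \<and> V \<subseteq> W))
     \<and> (\<forall>U V. open_subgroup G T U \<and> open_subgroup G T V \<longrightarrow> finite (double_cosets G U V))"

definition chain_lengths :: "('a, 'b) monoid_scheme \<Rightarrow> 'a set \<Rightarrow> nat set" where
  "chain_lengths G U = {n. \<exists>Us :: nat \<Rightarrow> 'a set. Us 0 = U
       \<and> (\<forall>i\<le>n. subgroup (Us i) G)
       \<and> (\<forall>i<n. Us i \<subset> Us (Suc i))}"

definition chain_sup :: "('a, 'b) monoid_scheme \<Rightarrow> 'a set \<Rightarrow> enat" where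
  "chain_sup G U = (SUP n \<in> chain_lengths G U. enat n)"

end

theory Submission
  imports Defs
begin

text \<open>A subgroup \<open>H \<supseteq> U\<close> is the union of the \<open>U\<close>-double cosets it contains, so a strictly
  larger subgroup contains strictly more double cosets. A strict chain of subgroups of length
  \<open>n\<close> starting at \<open>U\<close> therefore gives a strict chain of \<open>n + 1\<close> subsets of the double coset
  space \<open>U\G/U\<close>, which is finite by Roelcke precompactness; hence \<open>n \<le> |U\G/U|\<close>.\<close>

definition double_coset :: "('a, 'b) monoid_scheme \<Rightarrow> 'a set \<Rightarrow> 'a set \<Rightarrow> 'a \<Rightarrow> 'a set" where
  "double_coset G U V g = {u \<otimes>\<^bsub>G\<^esub> g \<otimes>\<^bsub>G\<^esub> v | u v. u \<in> U \<and> v \<in> V}"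

lemma double_cosets_eq_image: "double_cosets G U V = double_coset G U V ` carrier G"
  unfolding double_cosets_def double_coset_def by blast

lemma (in group) double_coset_self:
  assumes "subgroup U G" "subgroup V G" "g \<in> carrier G"
  shows "g \<in> double_coset G U V g"
proof -
  have "\<one> \<otimes> g \<otimes> \<one> = g"
    using assms(3) by simp
  then show ?thesis
    unfolding double_coset_def using subgroup.one_closed[OF assms(1)] subgroup.one_closed[OF assms(2)]
    by force
qed

lemma double_coset_subset_subgroup:
  assumes "subgroup H G" "U \<subseteq> H" "V \<subseteq> H" "g \<in> H"
  shows "double_coset G U V g \<subseteq> H"
  unfolding double_coset_def using assms by (auto intro: subgroup.m_closed)

lemma (in group) double_cosets_within_psubset:
  assumes "subgroup U G" "subgroup V G" "subgroup K G" "U \<subseteq> K" "V \<subseteq> K" "H \<subset> K"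
  shows "{d \<in> double_cosets G U V. d \<subseteq> H} \<subset> {d \<in> double_cosets G U V. d \<subseteq> K}"
proof (rule psubsetI)
  show "{d \<in> double_cosets G U V. d \<subseteq> H} \<subseteq> {d \<in> double_cosets G U V. d \<subseteq> K}"
    using assms(6) by auto
  obtain g where g: "g \<in> K" "g \<notin> H"
    using assms(6) by auto
  then have "g \<in> carrier G"
    using subgroup.mem_carrier[OF assms(3)] by simp
  then have "double_coset G U V g \<in> double_cosets G U V" "g \<in> double_coset G U V g"
    by (simp_all add: double_cosets_eq_image double_coset_self[OF assms(1,2)])
  moreover have "double_coset G U V g \<subseteq> K"
    using double_coset_subset_subgroup[OF assms(3-5) g(1)] .
  ultimately show "{d \<in> double_cosets G U V. d \<subseteq> H} \<noteq> {d \<in> double_cosets G U V. d \<subseteq> K}"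
    using g(2) by auto
qed

lemma strict_chain_length_le_card:
  assumes "finite A" "\<forall>i\<le>n. S i \<subseteq> A" "\<forall>i<n. S i \<subset> S (Suc i)"
  shows "n \<le> card A"
proof -
  have "i \<le> card (S i)" if "i \<le> n" for i
    using that
  proof (induction i)
    case (Suc i)
    have "finite (S (Suc i))"
      using assms(1,2) Suc.prems by (meson finite_subset)
    moreover have "S i \<subset> S (Suc i)"
      using assms(3) Suc.prems by simp
    ultimately have "card (S i) < card (S (Suc i))"
      by (rule psubset_card_mono)
    with Suc show ?case by simp
  qed simp
  then have "n \<le> card (S n)"
    by simp
  also have "\<dots> \<le> card A"
    using assms(1,2) by (simp add: card_mono)
  finally show ?thesis .
qed

lemma chain_base_subset:
  assumes "\<forall>i<n. S i \<subseteq> S (Suc i)" "i \<le> n"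
  shows "S 0 \<subseteq> S i"
  using assms(2)
proof (induction i)
  case (Suc i)
  then show ?case
    using assms(1) by (meson Suc_le_lessD less_imp_le_nat subset_trans)
qed simp

lemma (in group) chain_lengths_le_card_double_cosets:
  assumes "subgroup U G" "finite (double_cosets G U U)" "n \<in> chain_lengths G U"
  shows "n \<le> card (double_cosets G U U)"
proof -
  obtain Us where Us: "Us 0 = U" "\<forall>i\<le>n. subgroup (Us i) G" "\<forall>i<n. Us i \<subset> Us (Suc i)"
    using assms(3) unfolding chain_lengths_def by blast
  have "{d \<in> double_cosets G U U. d \<subseteq> Us i} \<subset> {d \<in> double_cosets G U U. d \<subseteq> Us (Suc i)}"
    if "i < n" for i
  proof (rule double_cosets_within_psubset[OF assms(1) assms(1)])
    show "subgroup (Us (Suc i)) G" "Us i \<subset> Us (Suc i)"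
      using Us(2,3) that by simp_all
    have "\<forall>j<n. Us j \<subseteq> Us (Suc j)"
      using Us(3) by auto
    then show "U \<subseteq> Us (Suc i)" "U \<subseteq> Us (Suc i)"
      using chain_base_subset[of n Us "Suc i"] Us(1) that by simp_all
  qed
  then show ?thesis
    by (intro strict_chain_length_le_card[OF assms(2),
          where S = "\<lambda>i. {d \<in> double_cosets G U U. d \<subseteq> Us i}"]) auto
qed

theorem proposition5p1:
  fixes G :: "('a, 'b) monoid_scheme" and T :: "'a topology" and U :: "'a set"
  assumes "pro_oligomorphic G T"
    and "open_subgroup G T U"
  shows "chain_sup G U \<noteq> \<infinity> \<and> finite (double_cosets G U U)
         \<and> chain_sup G U \<le> enat (card (double_cosets G U U))"
proof -
  have fin: "finite (double_cosets G U U)"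
    using assms unfolding pro_oligomorphic_def by blast
  have grp: "group G"
    using assms(1) unfolding pro_oligomorphic_def topological_group_def by blast
  have U: "subgroup U G"
    using assms(2) unfolding open_subgroup_def by blast
  have "chain_sup G U \<le> enat (card (double_cosets G U U))"
    unfolding chain_sup_def
  proof (rule SUP_least)
    fix n
    assume "n \<in> chain_lengths G U"
    then show "enat n \<le> enat (card (double_cosets G U U))"
      using group.chain_lengths_le_card_double_cosets[OF grp U fin] by simp
  qed
  then show ?thesis
    using fin by (cases "chain_sup G U") auto
qed

end
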